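(* Let $R$ be a commutative ring with identity and $M$ an $R$-module. Then $$\sqrt{(0:M)}\,M=\sum_{a\in\sqrt{(0:M)}} a\Gamma_a(M).$$
   Context: $(0:M)=\{r\in R\mid rM=0\}$ and $\sqrt{(0:M)}=\{r\in R\mid r^{k}\in(0:M) \text{ for some } k\in\mathbb{Z}^+\}$. For $a\in R$, $a\Gamma_{a}(M)=\{am \mid m\in M,\ a^{k}m=0 \text{ for some } k\in\mathbb{Z}^{+}\}$. *)

theory Defs
  imports Complex_Main
begin

text \<open>Modules over a commutative ring with identity: the HOL locale module, with
  scalar multiplication scale, ring = type 'a::comm_ring_1, module = type 'b (all of it).\<close>

definition ann :: "('a::comm_ring_1 \<Rightarrow> 'b::ab_group_add \<Rightarrow> 'b) \<Rightarrow> 'a set" where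
  "ann scale = {r. \<forall>m. scale r m = 0}"

definition rad :: "'a::comm_ring_1 set \<Rightarrow> 'a set" where
  "rad I = {r. \<exists>k::nat. k > 0 \<and> r ^ k \<in> I}"

definition aGamma :: "('a::comm_ring_1 \<Rightarrow> 'b::ab_group_add \<Rightarrow> 'b) \<Rightarrow> 'a \<Rightarrow> 'b set" where
  "aGamma scale a = {scale a m | m. \<exists>k::nat. k > 0 \<and> scale (a ^ k) m = 0}"

definition ideal_mult :: "('a::comm_ring_1 \<Rightarrow> 'b::ab_group_add \<Rightarrow> 'b) \<Rightarrow> 'a set \<Rightarrow> 'b set" where
  "ideal_mult scale I = module.span scale {scale r m | r m. r \<in> I}"

end

theory Submission
  imports Defs
begin

text \<open>Every \<open>a \<in> \<surd>(0:M)\<close> has a power annihilating all of \<open>M\<close>, so \<open>\<Gamma>\<^sub>a(M) = M\<close> and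
  \<open>a\<Gamma>\<^sub>a(M) = aM\<close>. Both sides are therefore spans of the same set \<open>{a m | a \<in> \<surd>(0:M), m \<in> M}\<close>.\<close>

lemma aGamma_eq_range_if_in_rad_ann:
  assumes "a \<in> rad (ann scale)"
  shows "aGamma scale a = range (scale a)"
proof -
  obtain k :: nat where "k > 0" and "\<forall>m. scale (a ^ k) m = 0"
    using assms unfolding rad_def ann_def by blast
  then show ?thesis unfolding aGamma_def by blast
qed

lemma products_eq_UN_range:
  "{scale r m | r m. r \<in> I} = (\<Union>a \<in> I. range (scale a))"
  by blast

theorem mainTheorem14:
  fixes scale :: "'a::comm_ring_1 \<Rightarrow> 'b::ab_group_add \<Rightarrow> 'b"
  assumes "module scale"
  shows "ideal_mult scale (rad (ann scale))
       = module.span scale (\<Union>a \<in> rad (ann scale). aGamma scale a)"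
proof -
  have "(\<Union>a \<in> rad (ann scale). aGamma scale a) = (\<Union>a \<in> rad (ann scale). range (scale a))"
    using aGamma_eq_range_if_in_rad_ann by (rule SUP_cong[OF refl])
  then show ?thesis
    unfolding ideal_mult_def products_eq_UN_range by simp
qed

end
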